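(* Let $\alpha\in(0,1/2)$ be sufficiently small (depending only on $w$), set $I_\alpha=p(1-\alpha)-p(\alpha)=2\int_\alpha^{1-\alpha}\sqrt{w(t)}\,dt$, and let $C$ satisfy $p(1)<C<\tfrac32 I_\alpha$. Then there is a constant $\bar C>0$, depending only on $C$ (and on $w$, $\alpha$, $\bar v$), with the following property: for every $\delta\in(0,1]$ and every $\xi\in A_\delta$ with $E_\delta[\xi]\le C$, there exists $\bar a\in\delta\mathbb{Z}$ such that the translate $\xi_{\bar a}(x):=\xi(x+\bar a)$ satisfies $$\|\xi_{\bar a}-\bar v\|_{L^2(\mathbb{R})}\le \bar C.$$
   Context: Let $w:\mathbb{R}\to\mathbb{R}$ be a function with continuous third derivative, periodic with period $1$, with $w(z)=0$ for all $z\in\mathbb{Z}$, $w(\xi)>0$ for $\xi\notin\mathbb{Z}$, $w''(z)>0$ for all $z\in\mathbb{Z}$, and $w(1-\xi)=w(\xi)$ for all $\xi$. Let $p(z)=2\int_0^z\sqrt{w(t)}\,dt$. Let $\bar v:\mathbb{R}\to\mathbb{R}$ be continuously differentiable and strictly increasing with $\bar v(x)\to0$ as $x\to-\infty$, $\bar v(x)\to1$ as $x\to\infty$, $1-\bar v\in L^1([0,\infty))\cap L^2([0,\infty))$, $\bar v\in L^1((-\infty,0])\cap L^2((-\infty,0])$, $\bar v'\in L^1(\mathbb{R})\cap L^2(\mathbb{R})$. Let $A=\{\xi:\xi-\bar v\in H^1(\mathbb{R})\}$. For $\delta>0$, $P_\delta=\{i\delta:i\in\mathbb{Z}\}$ and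 $A_\delta$ is the set of continuous $\xi\in A$ that are affine on each interval $[(i-1)\delta,i\delta]$, $i\in\mathbb{Z}$. Define $E_\delta:A\to[0,\infty]$ by $E_\delta[\xi]=\int_{-\infty}^\infty\xi'(x)^2\,dx+\int_{-\infty}^\infty w(\xi(x))\,dx$ if $\xi\in A_\delta$ and $E_\delta[\xi]=\infty$ otherwise. *)

theory Defs
  imports "HOL-Analysis.Analysis"
begin

definition well_potential :: "(real \<Rightarrow> real) \<Rightarrow> bool" where
  "well_potential w \<longleftrightarrow>
     (\<exists>w1 w2 w3. (\<forall>x. (w has_real_derivative w1 x) (at x)) \<and>
                 (\<forall>x. (w1 has_real_derivative w2 x) (at x)) \<and>
                 (\<forall>x. (w2 has_real_derivative w3 x) (at x)) \<and>
                 continuous_on UNIV w3 \<and>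
                 (\<forall>z\<in>\<int>. w2 z > 0)) \<and>
     (\<forall>x. w (x + 1) = w x) \<and>
     (\<forall>z\<in>\<int>. w z = 0) \<and>
     (\<forall>x. x \<notin> \<int> \<longrightarrow> w x > 0) \<and>
     (\<forall>x. w (1 - x) = w x)"

text \<open>p(z) = 2 \<integral>_0^z sqrt(w(t)) dt (only used for z \<ge> 0).\<close>
definition pfun :: "(real \<Rightarrow> real) \<Rightarrow> real \<Rightarrow> real" where
  "pfun w z = 2 * integral {0..z} (\<lambda>t. sqrt (w t))"

definition profile :: "(real \<Rightarrow> real) \<Rightarrow> bool" where
  "profile v \<longleftrightarrow>
     (\<exists>v'. (\<forall>x. (v has_real_derivative v' x) (at x)) \<and> continuous_on UNIV v' \<and>
           integrable lborel v' \<and> integrable lborel (\<lambda>x. (v' x)\<^sup>2)) \<and>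
     strict_mono v \<and>
     (v \<longlongrightarrow> 0) at_bot \<and> (v \<longlongrightarrow> 1) at_top \<and>
     set_integrable lborel {0..} (\<lambda>x. 1 - v x) \<and>
     set_integrable lborel {0..} (\<lambda>x. (1 - v x)\<^sup>2) \<and>
     set_integrable lborel {..0} v \<and>
     set_integrable lborel {..0} (\<lambda>x. (v x)\<^sup>2)"

definition test_fun :: "(real \<Rightarrow> real) \<Rightarrow> bool" where
  "test_fun \<phi> \<longleftrightarrow> (\<forall>n x. ((deriv ^^ n) \<phi>) differentiable (at x)) \<and>
                    (\<exists>R. \<forall>x. \<bar>x\<bar> > R \<longrightarrow> \<phi> x = 0)"

definition H1 :: "(real \<Rightarrow> real) \<Rightarrow> bool" where
  "H1 f \<longleftrightarrow> f \<in> borel_measurable lborel \<and> integrable lborel (\<lambda>x. (f x)\<^sup>2) \<and>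
     (\<exists>g. g \<in> borel_measurable lborel \<and> integrable lborel (\<lambda>x. (g x)\<^sup>2) \<and>
          (\<forall>\<phi>. test_fun \<phi> \<longrightarrow>
             (\<integral>x. f x * deriv \<phi> x \<partial>lborel) = - (\<integral>x. g x * \<phi> x \<partial>lborel)))"

definition Aset :: "(real \<Rightarrow> real) \<Rightarrow> (real \<Rightarrow> real) set" where
  "Aset v = {\<xi>. H1 (\<lambda>x. \<xi> x - v x)}"

definition Adelta :: "(real \<Rightarrow> real) \<Rightarrow> real \<Rightarrow> (real \<Rightarrow> real) set" where
  "Adelta v \<delta> = {\<xi>. \<xi> \<in> Aset v \<and> continuous_on UNIV \<xi> \<and>
     (\<forall>i::int. \<exists>a b. \<forall>x\<in>{(of_int i - 1) * \<delta> .. of_int i * \<delta>}. \<xi> x = a * x + b)}"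

text \<open>E_delta with values in [0,\<infinity>]; the derivative of a piecewise affine function
  exists off the (null) grid, so the classical derivative is used a.e.\<close>
definition Edelta :: "(real \<Rightarrow> real) \<Rightarrow> (real \<Rightarrow> real) \<Rightarrow> real \<Rightarrow> (real \<Rightarrow> real) \<Rightarrow> ennreal" where
  "Edelta w v \<delta> \<xi> = (if \<xi> \<in> Adelta v \<delta>
      then (\<integral>\<^sup>+x. ennreal ((deriv \<xi> x)\<^sup>2) \<partial>lborel) + (\<integral>\<^sup>+x. ennreal (w (\<xi> x)) \<partial>lborel)
      else \<infinity>)"

end

theory Submission
  imports Defs
begin

(*
  By the Modica--Mortola inequality 2 sqrt (w \<xi>) |\<xi>'| \<le> \<xi>'^2 + w \<xi>, the energy of \<xi> on an
  interval [a, b] is at least the cost |p(\<xi> b) - p(\<xi> a)| of moving between its end values.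
  Because \<xi> - vbar is square integrable, \<xi> drops below \<alpha> far to the left and exceeds 1 - \<alpha>
  far to the right, so it crosses [\<alpha>, 1 - \<alpha>] at a cost I = p(1 - \<alpha>) - p(\<alpha>) each time.
  As C < 3/2 I < 2 I, it crosses only once and never crosses a neighbouring well: there is x0
  with \<xi> in [\<alpha> - 1, 1 - \<alpha>] left of x0 and \<xi> in [\<alpha>, 2 - \<alpha>] right of x0. The minima of w
  are nondegenerate, so on either side the squared distance of \<xi> to the nearby well is at most
  K w(\<xi>). Translating by the grid point below x0 (at distance at most \<delta> \<le> 1) and comparing
  vbar with these wells bounds the L^2 distance by 2 K C plus a constant depending only on vbar.
  The argument works for every \<alpha> < 1/2.
*)

section \<open>The potential\<close>

lemma well_potential_continuous: "well_potential w \<Longrightarrow> continuous_on UNIV w"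
  unfolding well_potential_def by (meson DERIV_isCont continuous_at_imp_continuous_on)

lemma well_potential_nonneg: "well_potential w \<Longrightarrow> 0 \<le> w x"
  unfolding well_potential_def by (cases "x \<in> \<int>") (auto simp: less_imp_le)

lemma well_potential_periodic: "well_potential w \<Longrightarrow> w (x + 1) = w x"
  unfolding well_potential_def by blast

lemma quadratic_growth_near_minimum:
  fixes w w1 w2 :: "real \<Rightarrow> real"
  assumes d1: "\<And>x. (w has_real_derivative w1 x) (at x)"
    and d2: "\<And>x. (w1 has_real_derivative w2 x) (at x)"
    and w0: "\<And>x. 0 \<le> w x" and wz: "w z = 0" and pos: "0 < w2 z" and cont: "isCont w2 z"
  obtains r where "0 < r" "\<And>x. \<bar>x - z\<bar> \<le> r \<Longrightarrow> w2 z / 4 * (x - z)\<^sup>2 \<le> w x"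
proof -
  have w1z: "w1 z = 0"
    by (rule DERIV_local_min[OF d1[of z], of 1]) (use w0 wz in auto)
  have "eventually (\<lambda>x. w2 z / 2 < w2 x) (at z)"
    by (rule order_tendstoD(1)[OF cont[unfolded isCont_def]]) (use pos in simp)
  then obtain \<rho> where \<rho>: "0 < \<rho>" and near: "\<And>x. x \<noteq> z \<Longrightarrow> dist x z < \<rho> \<Longrightarrow> w2 z / 2 < w2 x"
    unfolding eventually_at by blast
  define r where "r = \<rho> / 2"
  have "w2 z / 4 * (x - z)\<^sup>2 \<le> w x" if x: "\<bar>x - z\<bar> \<le> r" for x
  proof (cases "x = z")
    case False
    have "z - r \<le> x" "x \<le> z + r" using x by auto
    define diff where "diff m = (if m = 0 then w else if m = 1 then w1 else w2)" for m :: nat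
    have "\<exists>t. (if x < z then x < t \<and> t < z else z < t \<and> t < x) \<and>
      w x = (\<Sum>m<2. diff m z / fact m * (x - z) ^ m) + diff 2 t / fact 2 * (x - z) ^ 2"
      by (rule Taylor[where a="z - r" and b="z + r"])
         (use d1 d2 \<open>z - r \<le> x\<close> \<open>x \<le> z + r\<close> False \<rho> in \<open>auto simp: diff_def less_2_cases_iff r_def\<close>)
    then obtain t where t: "if x < z then x < t \<and> t < z else z < t \<and> t < x"
      and eq: "w x = (\<Sum>m<2. diff m z / fact m * (x - z) ^ m) + diff 2 t / fact 2 * (x - z) ^ 2"
      by blast
    have taylor: "w x = w2 t / 2 * (x - z)\<^sup>2"
      using eq wz w1z by (simp add: diff_def numeral_2_eq_2 power2_eq_square)
    have "\<bar>t - z\<bar> \<le> \<bar>x - z\<bar>" using t by (auto split: if_splits)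
    have "w2 z / 2 < w2 t"
      using pos near[of t] \<open>\<bar>t - z\<bar> \<le> \<bar>x - z\<bar>\<close> x \<rho> by (cases "t = z") (auto simp: dist_real_def r_def)
    then show ?thesis
      unfolding taylor by (intro mult_right_mono) auto
  qed (simp add: wz)
  moreover have "0 < r" using \<rho> by (simp add: r_def)
  ultimately show ?thesis using that by blast
qed

lemma continuous_on_compact_pos_lower_bound:
  fixes f :: "'a::topological_space \<Rightarrow> real"
  assumes "compact S" "continuous_on S f" "\<And>z. z \<in> S \<Longrightarrow> 0 < f z"
  obtains m where "0 < m" "\<And>z. z \<in> S \<Longrightarrow> m \<le> f z"
proof (cases "S = {}")
  case False
  obtain z0 where "z0 \<in> S" "\<forall>z\<in>S. f z0 \<le> f z"
    using continuous_attains_inf[OF assms(1) False assms(2)] by blast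
  then show ?thesis using that[of "f z0"] assms(3) by auto
qed (use that[of 1] in auto)

lemma well_potential_coercive:
  assumes wp: "well_potential w" and "0 < \<alpha>" "\<alpha> < 1"
  obtains K where "0 < K" "\<And>z. z \<in> {\<alpha>..2 - \<alpha>} \<Longrightarrow> (z - 1)\<^sup>2 \<le> K * w z"
proof -
  obtain w1 w2 w3 where d1: "\<And>x. (w has_real_derivative w1 x) (at x)"
    and d2: "\<And>x. (w1 has_real_derivative w2 x) (at x)"
    and d3: "\<And>x. (w2 has_real_derivative w3 x) (at x)"
    and pos2: "\<forall>z\<in>\<int>. 0 < w2 z"
    using wp unfolding well_potential_def by blast
  have w0: "\<And>x. 0 \<le> w x" using well_potential_nonneg[OF wp] .
  have w1: "w 1 = 0" and wpos: "\<And>x. x \<notin> \<int> \<Longrightarrow> 0 < w x"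
    using wp unfolding well_potential_def by auto
  obtain r where r: "0 < r" and near: "\<And>z. \<bar>z - 1\<bar> \<le> r \<Longrightarrow> w2 1 / 4 * (z - 1)\<^sup>2 \<le> w z"
    by (rule quadratic_growth_near_minimum[OF d1 d2 w0 w1])
       (use pos2 DERIV_isCont[OF d3] in auto)
  define S where "S = {\<alpha>..1 - r} \<union> {1 + r..2 - \<alpha>}"
  have "0 < w z" if "z \<in> S" for z
  proof (rule wpos, rule notI)
    assume "z \<in> \<int>"
    moreover have "0 < z" "z < 2" "z \<noteq> 1" using that assms r unfolding S_def by auto
    ultimately show False by (elim Ints_cases) auto
  qed
  moreover have "compact S" unfolding S_def by (intro compact_Un compact_Icc)
  ultimately obtain m where m: "0 < m" and mS: "\<And>z. z \<in> S \<Longrightarrow> m \<le> w z"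
    using continuous_on_compact_pos_lower_bound continuous_on_subset[OF well_potential_continuous[OF wp]]
    by (metis subset_UNIV)
  define K where "K = max (4 / w2 1) (1 / m)"
  have "(z - 1)\<^sup>2 \<le> K * w z" if z: "z \<in> {\<alpha>..2 - \<alpha>}" for z
  proof (cases "\<bar>z - 1\<bar> \<le> r")
    case True
    have "(z - 1)\<^sup>2 \<le> 4 / w2 1 * w z" using near[OF True] pos2 by (simp add: field_simps)
    also have "\<dots> \<le> K * w z" by (intro mult_right_mono) (auto simp: K_def w0)
    finally show ?thesis .
  next
    case False
    then have "z \<in> S" using z unfolding S_def by auto
    have "\<bar>z - 1\<bar> \<le> 1" using z assms by auto
    then have "(z - 1)\<^sup>2 \<le> 1" by (simp add: abs_square_le_1)
    also have "1 \<le> 1 / m * w z" using mS[OF \<open>z \<in> S\<close>] m by (simp add: field_simps)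
    also have "\<dots> \<le> K * w z" by (intro mult_right_mono) (auto simp: K_def w0)
    finally show ?thesis .
  qed
  moreover have "0 < K" using m by (simp add: K_def less_max_iff_disj)
  ultimately show ?thesis using that by blast
qed

section \<open>The transition cost\<close>

definition transition_cost :: "(real \<Rightarrow> real) \<Rightarrow> real \<Rightarrow> real \<Rightarrow> real" where
  "transition_cost w x y = integral {min x y..max x y} (\<lambda>t. 2 * sqrt (w t))"

lemma transition_cost_nonneg:
  assumes "continuous_on UNIV w" and "\<And>t. 0 \<le> w t"
  shows "0 \<le> transition_cost w x y"
  unfolding transition_cost_def using assms
  by (intro integral_nonneg integrable_continuous_interval continuous_intros continuous_on_subset[OF assms(1)])
     auto

lemma transition_cost_mono:
  assumes wc: "continuous_on UNIV w" and w0: "\<And>t. 0 \<le> w t"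
    and "min x y \<le> a" "a \<le> b" "b \<le> max x y"
  shows "transition_cost w a b \<le> transition_cost w x y"
proof -
  have int: "(\<lambda>t. 2 * sqrt (w t)) integrable_on {p..q}" for p q
    by (intro integrable_continuous_interval continuous_intros continuous_on_subset[OF wc]) auto
  show ?thesis
    unfolding transition_cost_def
    by (rule integral_subset_le[OF _ int int]) (use assms(3-5) w0 in auto)
qed

lemma transition_cost_add:
  assumes wc: "continuous_on UNIV w" and "a \<le> b" "b \<le> c"
  shows "transition_cost w a c = transition_cost w a b + transition_cost w b c"
proof -
  have "(\<lambda>t. 2 * sqrt (w t)) integrable_on {a..c}"
    by (intro integrable_continuous_interval continuous_intros continuous_on_subset[OF wc]) auto
  from Henstock_Kurzweil_Integration.integral_combine[OF assms(2,3) this] show ?thesis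
    unfolding transition_cost_def using assms(2,3) by simp
qed

lemma transition_cost_shift:
  assumes "\<And>t. w (t + 1) = w t"
  shows "transition_cost w (a + 1) (b + 1) = transition_cost w a b"
proof -
  have "integral {min (a + 1) (b + 1) - 1..max (a + 1) (b + 1) - 1} (\<lambda>t. 2 * sqrt (w (t + 1)))
      = integral {min (a + 1) (b + 1)..max (a + 1) (b + 1)} (\<lambda>t. 2 * sqrt (w t))"
    by (rule integral_shift_real_ivl)
  moreover have "min (a + 1) (b + 1) - 1 = min a b" "max (a + 1) (b + 1) - 1 = max a b"
    by (auto simp: min_def max_def)
  ultimately show ?thesis
    unfolding transition_cost_def by (simp only: assms)
qed

lemma pfun_diff_eq_transition_cost:
  assumes wc: "continuous_on UNIV w" and "0 \<le> a" "a \<le> b"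
  shows "pfun w b - pfun w a = transition_cost w a b"
proof -
  have "transition_cost w 0 b = transition_cost w 0 a + transition_cost w a b"
    by (rule transition_cost_add[OF wc]) (use assms in auto)
  moreover have "pfun w z = transition_cost w 0 z" if "0 \<le> z" for z
    unfolding pfun_def transition_cost_def using that by simp
  ultimately show ?thesis using assms by simp
qed

lemma energy_window_transition_cost:
  assumes wc: "continuous_on UNIV w" and w0: "\<And>t. 0 \<le> w t" and \<alpha>: "0 < \<alpha>" "\<alpha> < 1/2"
    and C: "pfun w 1 < C" "C < 3/2 * (pfun w (1 - \<alpha>) - pfun w \<alpha>)"
  shows "0 < C" "C < 2 * transition_cost w \<alpha> (1 - \<alpha>)"
proof -
  show "0 < C"
    using C(1) pfun_diff_eq_transition_cost[OF wc, of 0 1] transition_cost_nonneg[OF wc w0, of 0 1]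
    by (simp add: pfun_def)
  moreover have "C < 3/2 * transition_cost w \<alpha> (1 - \<alpha>)"
    using C(2) pfun_diff_eq_transition_cost[OF wc, of \<alpha> "1 - \<alpha>"] \<alpha> by simp
  ultimately show "C < 2 * transition_cost w \<alpha> (1 - \<alpha>)" by linarith
qed

context
  fixes w :: "real \<Rightarrow> real" and \<alpha> :: real
  assumes wc: "continuous_on UNIV w" and w0: "\<And>t. 0 \<le> w t" and wper: "\<And>t. w (t + 1) = w t"
    and \<alpha>: "0 \<le> \<alpha>" "\<alpha> \<le> 1/2"
begin

lemma transition_cost_two_wells_right: "2 * transition_cost w \<alpha> (1 - \<alpha>) \<le> transition_cost w \<alpha> (2 - \<alpha>)"
proof -
  have "transition_cost w \<alpha> (1 - \<alpha>) = transition_cost w (\<alpha> + 1) (2 - \<alpha>)"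
    using transition_cost_shift[of w \<alpha> "1 - \<alpha>", OF wper] by (simp add: algebra_simps)
  also have "\<dots> \<le> transition_cost w (1 - \<alpha>) (2 - \<alpha>)"
    by (rule transition_cost_mono[OF wc w0]) (use \<alpha> in \<open>simp_all add: min_def max_def\<close>)
  also have "\<dots> = transition_cost w \<alpha> (2 - \<alpha>) - transition_cost w \<alpha> (1 - \<alpha>)"
    using transition_cost_add[OF wc, of \<alpha> "1 - \<alpha>" "2 - \<alpha>"] \<alpha> by linarith
  finally show ?thesis by linarith
qed

lemma transition_cost_two_wells_left: "2 * transition_cost w \<alpha> (1 - \<alpha>) \<le> transition_cost w (\<alpha> - 1) (1 - \<alpha>)"
proof -
  have "transition_cost w \<alpha> (1 - \<alpha>) = transition_cost w (\<alpha> - 1) (- \<alpha>)"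
    using transition_cost_shift[of w "\<alpha> - 1" "- \<alpha>", OF wper] by (simp add: algebra_simps)
  also have "\<dots> \<le> transition_cost w (\<alpha> - 1) \<alpha>"
    by (rule transition_cost_mono[OF wc w0]) (use \<alpha> in \<open>simp_all add: min_def max_def\<close>)
  also have "\<dots> = transition_cost w (\<alpha> - 1) (1 - \<alpha>) - transition_cost w \<alpha> (1 - \<alpha>)"
    using transition_cost_add[OF wc, of "\<alpha> - 1" \<alpha> "1 - \<alpha>"] \<alpha> by linarith
  finally show ?thesis by linarith
qed

end

section \<open>Piecewise affine functions\<close>

definition grid_affine :: "real \<Rightarrow> (real \<Rightarrow> real) \<Rightarrow> bool" where
  "grid_affine \<delta> \<xi> \<longleftrightarrow>
     (\<forall>i::int. \<exists>a b. \<forall>x\<in>{(of_int i - 1) * \<delta> .. of_int i * \<delta>}. \<xi> x = a * x + b)"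

lemma Adelta_iff:
  "\<xi> \<in> Adelta v \<delta> \<longleftrightarrow> \<xi> \<in> Aset v \<and> continuous_on UNIV \<xi> \<and> grid_affine \<delta> \<xi>"
  by (simp add: Adelta_def grid_affine_def)

definition grid_slope :: "real \<Rightarrow> (real \<Rightarrow> real) \<Rightarrow> real \<Rightarrow> real" where
  "grid_slope \<delta> \<xi> x = (\<xi> ((of_int \<lfloor>x/\<delta>\<rfloor> + 1) * \<delta>) - \<xi> (of_int \<lfloor>x/\<delta>\<rfloor> * \<delta>)) / \<delta>"

lemma borel_measurable_grid_slope:
  assumes "continuous_on UNIV \<xi>"
  shows "grid_slope \<delta> \<xi> \<in> borel_measurable borel"
proof -
  have [measurable]: "\<xi> \<in> borel_measurable borel"
    using assms borel_measurable_continuous_onI by blast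
  show ?thesis unfolding grid_slope_def by measurable
qed

lemma grid_affine_has_real_derivative:
  assumes d: "\<delta> > 0" and aff: "grid_affine \<delta> \<xi>"
    and x: "x \<notin> range (\<lambda>i::int. of_int i * \<delta>)"
  shows "(\<xi> has_real_derivative grid_slope \<delta> \<xi> x) (at x)"
proof -
  define m where "m = \<lfloor>x/\<delta>\<rfloor>"
  have "of_int m \<le> x/\<delta>" "x/\<delta> < of_int m + 1" unfolding m_def by linarith+
  then have l: "of_int m * \<delta> \<le> x" and r: "x < (of_int m + 1) * \<delta>"
    using d by (auto simp: field_simps)
  have l': "of_int m * \<delta> < x" using l x by (metis order_le_imp_less_or_eq rangeI)
  obtain a b where ab: "\<forall>y\<in>{(of_int (m+1) - 1) * \<delta> .. of_int (m+1) * \<delta>}. \<xi> y = a * y + b"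
    using aff unfolding grid_affine_def by blast
  then have ab': "\<And>y. y \<in> {of_int m * \<delta> .. (of_int m + 1) * \<delta>} \<Longrightarrow> \<xi> y = a * y + b"
    by simp
  have slope: "grid_slope \<delta> \<xi> x = a"
    unfolding grid_slope_def m_def[symmetric]
    using ab'[of "(of_int m + 1) * \<delta>"] ab'[of "of_int m * \<delta>"] d by (simp add: field_simps)
  have "((\<lambda>y. a * y + b) has_real_derivative a) (at x)"
    by (auto intro!: derivative_eq_intros)
  then show ?thesis
    unfolding slope
    by (rule has_field_derivative_transform_within_open[where S="{of_int m * \<delta> <..< (of_int m + 1) * \<delta>}"])
       (use l' r ab' in auto)
qed

lemma finite_grid_Int_interval:
  fixes \<delta> a b :: real
  assumes "\<delta> > 0"
  shows "finite (range (\<lambda>i::int. of_int i * \<delta>) \<inter> {a..b})"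
proof (rule finite_subset)
  show "range (\<lambda>i::int. of_int i * \<delta>) \<inter> {a..b} \<subseteq> (\<lambda>i::int. of_int i * \<delta>) ` {\<lceil>a/\<delta>\<rceil>..\<lfloor>b/\<delta>\<rfloor>}"
  proof
    fix y assume "y \<in> range (\<lambda>i::int. of_int i * \<delta>) \<inter> {a..b}"
    then obtain i where y: "y = of_int i * \<delta>" "a \<le> of_int i * \<delta>" "of_int i * \<delta> \<le> b" by auto
    then have "a/\<delta> \<le> of_int i" "of_int i \<le> b/\<delta>" using assms by (auto simp: field_simps)
    then show "y \<in> (\<lambda>i::int. of_int i * \<delta>) ` {\<lceil>a/\<delta>\<rceil>..\<lfloor>b/\<delta>\<rfloor>}"
      using y by (auto simp: ceiling_le le_floor_iff)
  qed
qed simp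

lemma grid_affine_nn_integral_deriv:
  assumes "\<delta> > 0" "grid_affine \<delta> \<xi>"
  shows "(\<integral>\<^sup>+x. ennreal ((deriv \<xi> x)\<^sup>2) \<partial>lborel) = (\<integral>\<^sup>+x. ennreal ((grid_slope \<delta> \<xi> x)\<^sup>2) \<partial>lborel)"
proof (rule nn_integral_cong_AE)
  have "AE x in lborel. x \<notin> range (\<lambda>i::int. of_int i * \<delta>)"
    by (rule AE_not_in[OF countable_imp_null_set_lborel]) simp
  then show "AE x in lborel. ennreal ((deriv \<xi> x)\<^sup>2) = ennreal ((grid_slope \<delta> \<xi> x)\<^sup>2)"
    by eventually_elim (metis DERIV_imp_deriv grid_affine_has_real_derivative[OF assms])
qed

lemma Edelta_eq_grid_energy:
  assumes "0 < \<delta>" "\<xi> \<in> Adelta v \<delta>" "continuous_on UNIV w" "\<And>t. 0 \<le> w t"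
  shows "Edelta w v \<delta> \<xi> = (\<integral>\<^sup>+x. ennreal ((grid_slope \<delta> \<xi> x)\<^sup>2 + w (\<xi> x)) \<partial>lborel)"
proof -
  have \<xi>c: "continuous_on UNIV \<xi>" and "grid_affine \<delta> \<xi>" using assms(2) by (auto simp: Adelta_iff)
  have [measurable]: "\<xi> \<in> borel_measurable borel" "w \<in> borel_measurable borel"
    using borel_measurable_continuous_onI \<xi>c assms(3) by blast+
  have [measurable]: "grid_slope \<delta> \<xi> \<in> borel_measurable borel"
    by (rule borel_measurable_grid_slope[OF \<xi>c])
  have "(\<integral>\<^sup>+x. ennreal ((grid_slope \<delta> \<xi> x)\<^sup>2 + w (\<xi> x)) \<partial>lborel)
      = (\<integral>\<^sup>+x. ennreal ((grid_slope \<delta> \<xi> x)\<^sup>2) + ennreal (w (\<xi> x)) \<partial>lborel)"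
    using assms(4) by (intro nn_integral_cong ennreal_plus) auto
  also have "\<dots> = (\<integral>\<^sup>+x. ennreal ((grid_slope \<delta> \<xi> x)\<^sup>2) \<partial>lborel) + (\<integral>\<^sup>+x. ennreal (w (\<xi> x)) \<partial>lborel)"
    by (rule nn_integral_add) auto
  finally show ?thesis
    using assms(2) grid_affine_nn_integral_deriv[OF assms(1) \<open>grid_affine \<delta> \<xi>\<close>]
    by (simp add: Edelta_def)
qed

lemma Edelta_ge_potential:
  assumes "0 < \<delta>" "\<xi> \<in> Adelta v \<delta>" "continuous_on UNIV w" "\<And>t. 0 \<le> w t"
  shows "(\<integral>\<^sup>+x. ennreal (w (\<xi> x)) \<partial>lborel) \<le> Edelta w v \<delta> \<xi>"
  unfolding Edelta_eq_grid_energy[OF assms] by (intro nn_integral_mono) (simp add: assms(4))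

section \<open>The Modica--Mortola bound\<close>

lemma has_integral_abs_le_nn_integral:
  fixes f g :: "real \<Rightarrow> real"
  assumes fm: "f \<in> borel_measurable borel" and gm: "g \<in> borel_measurable borel"
    and fg: "\<And>x. \<bar>g x\<bar> \<le> f x" and gi: "(g has_integral I) {a..b}"
  shows "ennreal \<bar>I\<bar> \<le> (\<integral>\<^sup>+x. ennreal (indicator {a..b} x * f x) \<partial>lborel)"
proof (cases "(\<integral>\<^sup>+x. ennreal (indicator {a..b} x * f x) \<partial>lborel) = \<infinity>")
  case False
  define F where "F x = indicator {a..b} x * f x" for x
  define G where "G x = indicator {a..b} x * g x" for x
  have F0: "0 \<le> F x" for x using fg[of x] by (simp add: F_def)
  have Fm: "F \<in> borel_measurable lborel" unfolding F_def using fm by measurable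
  have Gm: "G \<in> borel_measurable lborel" unfolding G_def using gm by measurable
  have Fi: "integrable lborel F"
    using False F0 by (intro integrableI_bounded[OF Fm]) (simp add: F_def[symmetric] less_top)
  have Gi: "integrable lborel G"
    by (rule Bochner_Integration.integrable_bound[OF Fi Gm])
       (use fg F0 in \<open>auto simp: F_def G_def indicator_def\<close>)
  have "(\<lambda>x. if x \<in> {a..b} then g x else 0) = G"
    by (auto simp: G_def indicator_def)
  then have "(G has_integral I) UNIV"
    using gi has_integral_restrict_UNIV[of "{a..b}" g I] by simp
  then have IG: "I = (\<integral>x. G x \<partial>lborel)"
    using has_integral_integral_real[OF Gi] has_integral_unique by blast
  have "\<bar>I\<bar> \<le> (\<integral>x. F x \<partial>lborel)"
    unfolding IG by (rule integral_abs_bound_integral[OF Gi Fi])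
      (use fg in \<open>auto simp: F_def G_def indicator_def\<close>)
  then have "ennreal \<bar>I\<bar> \<le> ennreal (\<integral>x. F x \<partial>lborel)" by simp
  also have "\<dots> = (\<integral>\<^sup>+x. ennreal (F x) \<partial>lborel)"
    by (rule nn_integral_eq_integral[symmetric]) (use Fi F0 in auto)
  finally show ?thesis by (simp add: F_def)
qed simp

lemma continuous_on_UNIV_antiderivative:
  fixes f :: "real \<Rightarrow> real"
  assumes "continuous_on UNIV f"
  obtains F where "\<And>t. (F has_real_derivative f t) (at t)"
    and "\<And>s t. s \<le> t \<Longrightarrow> F t - F s = integral {s..t} f"
proof -
  obtain F where F: "\<And>t. (F has_vector_derivative f t) (at t)"
    using einterval_antiderivative[of "-\<infinity>" "\<infinity>" f] assms
    by (auto simp: continuous_on_eq_continuous_at)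
  have "F t - F s = integral {s..t} f" if "s \<le> t" for s t
    using fundamental_theorem_of_calculus[OF that, of F f] F
    by (metis has_vector_derivative_at_within integral_unique)
  with F show ?thesis
    by (intro that) (auto simp: has_real_derivative_iff_has_vector_derivative)
qed

lemma abs_two_sqrt_mult_le:
  fixes u s :: real
  assumes "0 \<le> u"
  shows "\<bar>2 * sqrt u * s\<bar> \<le> s\<^sup>2 + u"
proof -
  have "0 \<le> (sqrt u - \<bar>s\<bar>)\<^sup>2" by simp
  then show ?thesis
    using assms by (simp add: abs_mult power2_eq_square algebra_simps)
qed

lemma transition_cost_le_energy:
  fixes \<xi> \<xi>' w :: "real \<Rightarrow> real"
  assumes G: "finite G" and ab: "a \<le> b"
    and \<xi>c: "continuous_on UNIV \<xi>"
    and \<xi>d: "\<And>x. x \<in> {a<..<b} - G \<Longrightarrow> (\<xi> has_real_derivative \<xi>' x) (at x)"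
    and \<xi>'m: "\<xi>' \<in> borel_measurable borel"
    and wc: "continuous_on UNIV w" and w0: "\<And>t. 0 \<le> w t"
  shows "ennreal (transition_cost w (\<xi> a) (\<xi> b))
    \<le> (\<integral>\<^sup>+x. ennreal (indicator {a..b} x * ((\<xi>' x)\<^sup>2 + w (\<xi> x))) \<partial>lborel)"
proof -
  define f where "f t = 2 * sqrt (w t)" for t
  have fc: "continuous_on UNIV f" unfolding f_def by (intro continuous_intros wc)
  obtain F where F: "\<And>t. (F has_real_derivative f t) (at t)"
    and Fint: "\<And>s t. s \<le> t \<Longrightarrow> F t - F s = integral {s..t} f"
    using continuous_on_UNIV_antiderivative[OF fc] by blast
  have Fc: "continuous_on UNIV F"
    using F by (meson DERIV_isCont continuous_at_imp_continuous_on)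
  \<comment> \<open>g = (F \<circ> \<xi>)' off the finite set G, and g is dominated by the energy density.\<close>
  define g where "g x = f (\<xi> x) * \<xi>' x" for x
  have gi: "(g has_integral (F \<circ> \<xi>) b - (F \<circ> \<xi>) a) {a..b}"
  proof (rule fundamental_theorem_of_calculus_interior_strong[OF G ab])
    fix x assume x: "x \<in> {a<..<b} - G"
    have "((F \<circ> \<xi>) has_real_derivative f (\<xi> x) * \<xi>' x) (at x)"
      by (rule DERIV_chain[OF F \<xi>d[OF x]])
    then show "((F \<circ> \<xi>) has_vector_derivative g x) (at x)"
      by (simp add: g_def has_real_derivative_iff_has_vector_derivative)
  next
    show "continuous_on {a..b} (F \<circ> \<xi>)"
      by (rule continuous_on_subset[OF continuous_on_compose[OF \<xi>c]])
         (use Fc in \<open>auto intro: continuous_on_subset\<close>)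
  qed
  have cost: "\<bar>F (\<xi> b) - F (\<xi> a)\<bar> = transition_cost w (\<xi> a) (\<xi> b)"
  proof -
    have nonneg: "0 \<le> integral {s..t} f" for s t
      by (intro integral_nonneg integrable_continuous_interval continuous_on_subset[OF fc])
         (auto simp: f_def w0)
    then show ?thesis
      unfolding transition_cost_def f_def[symmetric]
      using Fint[of "\<xi> a" "\<xi> b"] Fint[of "\<xi> b" "\<xi> a"] nonneg
      by (cases "\<xi> a \<le> \<xi> b") (simp_all add: abs_minus_commute)
  qed
  have gh: "\<bar>g x\<bar> \<le> (\<xi>' x)\<^sup>2 + w (\<xi> x)" for x
    unfolding g_def f_def by (rule abs_two_sqrt_mult_le[OF w0])
  have [measurable]: "\<xi> \<in> borel_measurable borel" "w \<in> borel_measurable borel"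
    using borel_measurable_continuous_onI \<xi>c wc by blast+
  have hm: "(\<lambda>x. (\<xi>' x)\<^sup>2 + w (\<xi> x)) \<in> borel_measurable borel" using \<xi>'m by measurable
  have gm: "g \<in> borel_measurable borel" unfolding g_def f_def using \<xi>'m by measurable
  show ?thesis
    using has_integral_abs_le_nn_integral[OF hm gm gh gi] by (simp add: cost)
qed

section \<open>A single transition\<close>

lemma square_integrable_small_somewhere:
  fixes g :: "real \<Rightarrow> real"
  assumes gi: "integrable lborel (\<lambda>x. (g x)\<^sup>2)" and \<beta>: "0 < \<beta>"
    and long: "\<And>L. 0 \<le> L \<Longrightarrow> \<exists>a. {a..a + L} \<subseteq> S"
  shows "\<exists>x\<in>S. \<bar>g x\<bar> < \<beta>"
proof (rule ccontr)
  assume none: "\<not> ?thesis"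
  have big: "\<beta>\<^sup>2 \<le> (g x)\<^sup>2" if "x \<in> S" for x
  proof -
    have "\<beta> \<le> \<bar>g x\<bar>" using none that by (meson not_less)
    then have "\<beta>\<^sup>2 \<le> \<bar>g x\<bar>\<^sup>2" using \<beta> by (intro power_mono) auto
    then show ?thesis by simp
  qed
  define F where "F = (\<integral>x. (g x)\<^sup>2 \<partial>lborel)"
  have F: "(\<integral>\<^sup>+x. ennreal ((g x)\<^sup>2) \<partial>lborel) = ennreal F"
    unfolding F_def by (rule nn_integral_eq_integral[OF gi]) simp
  define L where "L = (F + 1) / \<beta>\<^sup>2"
  have "0 \<le> F" unfolding F_def by simp
  then have L: "0 \<le> L" "\<beta>\<^sup>2 * L = F + 1" unfolding L_def using \<beta> by auto
  obtain a where aS: "{a..a + L} \<subseteq> S" using long[OF L(1)] by blast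
  have "ennreal (\<beta>\<^sup>2) * ennreal L = (\<integral>\<^sup>+x. ennreal (\<beta>\<^sup>2) * indicator {a..a + L} x \<partial>lborel)"
    using L(1) by (simp add: nn_integral_cmult_indicator)
  also have "\<dots> \<le> (\<integral>\<^sup>+x. ennreal ((g x)\<^sup>2) \<partial>lborel)"
    using aS big by (intro nn_integral_mono) (auto simp: indicator_def)
  finally have "ennreal (\<beta>\<^sup>2 * L) \<le> ennreal F" unfolding F using L(1) by (simp add: ennreal_mult)
  then have "\<beta>\<^sup>2 * L \<le> F" using \<open>0 \<le> F\<close> by simp
  then show False using L by simp
qed

lemma L2_perturbation_below_left:
  fixes \<xi> v :: "real \<Rightarrow> real"
  assumes gi: "integrable lborel (\<lambda>x. (\<xi> x - v x)\<^sup>2)" and lim: "(v \<longlongrightarrow> 0) at_bot" and "0 < \<alpha>"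
  shows "\<exists>l<M. \<xi> l < \<alpha>"
proof -
  obtain N where N: "\<And>x. x \<le> N \<Longrightarrow> v x < \<alpha> / 2"
    using order_tendstoD(2)[OF lim, of "\<alpha> / 2"] \<open>0 < \<alpha>\<close> by (auto simp: eventually_at_bot_linorder)
  have "\<exists>l\<in>{..min (M - 1) N}. \<bar>\<xi> l - v l\<bar> < \<alpha> / 2"
  proof (rule square_integrable_small_somewhere[OF gi])
    show "\<exists>a. {a..a + L} \<subseteq> {..min (M - 1) N}" for L
      by (intro exI[of _ "min (M - 1) N - L"]) auto
  qed (use \<open>0 < \<alpha>\<close> in simp)
  then obtain l where l: "l \<le> min (M - 1) N" "\<bar>\<xi> l - v l\<bar> < \<alpha> / 2" by auto
  then have "\<xi> l < \<alpha>" using N[of l] abs_less_iff[of "\<xi> l - v l" "\<alpha> / 2"] by linarith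
  moreover have "l < M" using l by linarith
  ultimately show ?thesis by blast
qed

lemma L2_perturbation_above_right:
  fixes \<xi> v :: "real \<Rightarrow> real"
  assumes gi: "integrable lborel (\<lambda>x. (\<xi> x - v x)\<^sup>2)" and lim: "(v \<longlongrightarrow> 1) at_top" and "0 < \<alpha>"
  shows "\<exists>r>M. 1 - \<alpha> < \<xi> r"
proof -
  obtain N where N: "\<And>x. N \<le> x \<Longrightarrow> 1 - \<alpha> / 2 < v x"
    using order_tendstoD(1)[OF lim, of "1 - \<alpha> / 2"] \<open>0 < \<alpha>\<close> by (auto simp: eventually_at_top_linorder)
  have "\<exists>r\<in>{max (M + 1) N..}. \<bar>\<xi> r - v r\<bar> < \<alpha> / 2"
  proof (rule square_integrable_small_somewhere[OF gi])
    show "\<exists>a. {a..a + L} \<subseteq> {max (M + 1) N..}" for L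
      by (intro exI[of _ "max (M + 1) N"]) auto
  qed (use \<open>0 < \<alpha>\<close> in simp)
  then obtain r where r: "max (M + 1) N \<le> r" "\<bar>\<xi> r - v r\<bar> < \<alpha> / 2" by auto
  then have "1 - \<alpha> < \<xi> r" using N[of r] abs_less_iff[of "\<xi> r - v r" "\<alpha> / 2"] by linarith
  moreover have "M < r" using r by linarith
  ultimately show ?thesis by blast
qed

(* En a b plays the role of the energy of \<xi> on [a, b]. *)
locale bounded_transition_energy =
  fixes w \<xi> :: "real \<Rightarrow> real" and En :: "real \<Rightarrow> real \<Rightarrow> ennreal" and \<alpha> C :: real
  assumes continuous_w: "continuous_on UNIV w" and nonneg_w: "\<And>t. 0 \<le> w t"
    and periodic_w: "\<And>t. w (t + 1) = w t"
    and continuous_\<xi>: "continuous_on UNIV \<xi>"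
    and \<alpha>: "0 \<le> \<alpha>" "\<alpha> \<le> 1/2"
    and C: "0 \<le> C" "C < 2 * transition_cost w \<alpha> (1 - \<alpha>)"
    and energy_split: "\<And>l a r. l \<le> a \<Longrightarrow> a \<le> r \<Longrightarrow> En l a + En a r \<le> En l r"
    and energy_bounded: "\<And>a b. En a b \<le> ennreal C"
    and cost_le_energy: "\<And>a b. a \<le> b \<Longrightarrow> ennreal (transition_cost w (\<xi> a) (\<xi> b)) \<le> En a b"
    and dips_left: "\<And>M. \<exists>l<M. \<xi> l < \<alpha>"
    and rises_right: "\<And>M. \<exists>r>M. 1 - \<alpha> < \<xi> r"
begin

lemma cost_le_C: "a \<le> b \<Longrightarrow> transition_cost w (\<xi> a) (\<xi> b) \<le> C"
  using order_trans[OF cost_le_energy energy_bounded] C(1) by simp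

lemma crossing_cost:
  "min x y \<le> \<alpha> \<Longrightarrow> 1 - \<alpha> \<le> max x y \<Longrightarrow> transition_cost w \<alpha> (1 - \<alpha>) \<le> transition_cost w x y"
  by (rule transition_cost_mono[OF continuous_w nonneg_w]) (use \<alpha> in auto)

lemma no_return:
  assumes "a < b" "1 - \<alpha> \<le> \<xi> a"
  shows "\<alpha> < \<xi> b"
proof (rule ccontr)
  assume "\<not> \<alpha> < \<xi> b"
  obtain l where l: "l < a" "\<xi> l < \<alpha>" using dips_left by blast
  obtain r where r: "b < r" "1 - \<alpha> < \<xi> r" using rises_right by blast
  define I where "I = transition_cost w \<alpha> (1 - \<alpha>)"
  have I: "0 \<le> I" using C unfolding I_def by linarith
  have "ennreal I \<le> En x y" if "x \<le> y" "min (\<xi> x) (\<xi> y) \<le> \<alpha>" "1 - \<alpha> \<le> max (\<xi> x) (\<xi> y)" for x y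
    unfolding I_def
    by (rule order_trans[OF ennreal_leI[OF crossing_cost[OF that(2,3)]] cost_le_energy[OF that(1)]])
  then have "ennreal I + ennreal I + ennreal I \<le> En l a + En a b + En b r"
    using l r assms \<open>\<not> \<alpha> < \<xi> b\<close> \<alpha> by (intro add_mono) auto
  also have "\<dots> \<le> En l r"
    using l r assms by (intro order_trans[OF add_right_mono[OF energy_split] energy_split]) auto
  also have "\<dots> \<le> ennreal C" by (rule energy_bounded)
  finally have "3 * I \<le> C" using I C(1) by (simp add: ennreal_plus[symmetric] del: ennreal_plus)
  then show False using C(2) I unfolding I_def by linarith
qed

lemma bounded_above: "\<xi> y \<le> 2 - \<alpha>"
proof (rule ccontr)
  assume "\<not> \<xi> y \<le> 2 - \<alpha>"
  obtain l where l: "l < y" "\<xi> l < \<alpha>" using dips_left by blast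
  have "2 * transition_cost w \<alpha> (1 - \<alpha>) \<le> transition_cost w \<alpha> (2 - \<alpha>)"
    by (rule transition_cost_two_wells_right[of w \<alpha>, OF continuous_w nonneg_w periodic_w \<alpha>])
  also have "\<dots> \<le> transition_cost w (\<xi> l) (\<xi> y)"
    using l \<open>\<not> \<xi> y \<le> 2 - \<alpha>\<close> \<alpha> by (intro transition_cost_mono[OF continuous_w nonneg_w]) auto
  also have "\<dots> \<le> C" using l by (intro cost_le_C) auto
  finally show False using C(2) by linarith
qed

lemma bounded_below: "\<alpha> - 1 \<le> \<xi> y"
proof (rule ccontr)
  assume "\<not> \<alpha> - 1 \<le> \<xi> y"
  obtain r where r: "y < r" "1 - \<alpha> < \<xi> r" using rises_right by blast
  have "2 * transition_cost w \<alpha> (1 - \<alpha>) \<le> transition_cost w (\<alpha> - 1) (1 - \<alpha>)"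
    by (rule transition_cost_two_wells_left[of w \<alpha>, OF continuous_w nonneg_w periodic_w \<alpha>])
  also have "\<dots> \<le> transition_cost w (\<xi> y) (\<xi> r)"
    using r \<open>\<not> \<alpha> - 1 \<le> \<xi> y\<close> \<alpha> by (intro transition_cost_mono[OF continuous_w nonneg_w]) auto
  also have "\<dots> \<le> C" using r by (intro cost_le_C) auto
  finally show False using C(2) by linarith
qed

lemma single_transition:
  obtains x0 where "\<And>y. x0 \<le> y \<Longrightarrow> \<xi> y \<in> {\<alpha>..2 - \<alpha>}" "\<And>y. y < x0 \<Longrightarrow> \<xi> y \<in> {\<alpha> - 1..1 - \<alpha>}"
proof -
  define S where "S = {y. 1 - \<alpha> \<le> \<xi> y}"
  obtain r0 where "1 - \<alpha> < \<xi> r0" using rises_right by blast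
  then have "r0 \<in> S" unfolding S_def by simp
  then have "S \<noteq> {}" by blast
  obtain l0 where "\<xi> l0 < \<alpha>" using dips_left by blast
  have "l0 \<le> y" if "y \<in> S" for y
  proof (rule ccontr)
    assume "\<not> l0 \<le> y"
    then have "\<alpha> < \<xi> l0" using no_return[of y l0] that unfolding S_def by simp
    with \<open>\<xi> l0 < \<alpha>\<close> show False by simp
  qed
  then have "bdd_below S" by (rule bdd_belowI)
  have "closed S"
    unfolding S_def using continuous_\<xi> by (intro closed_Collect_le continuous_intros) auto
  define x0 where "x0 = Inf S"
  have "x0 \<in> S" unfolding x0_def by (rule closed_contains_Inf) fact+
  have "\<xi> y \<in> {\<alpha>..2 - \<alpha>}" if "x0 \<le> y" for y
  proof (cases "y = x0")
    case False
    then have "Inf S < y" using that unfolding x0_def by simp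
    then obtain s where "s \<in> S" "s < y"
      using cInf_less_iff[OF \<open>S \<noteq> {}\<close> \<open>bdd_below S\<close>] by blast
    then show ?thesis using no_return[of s y] bounded_above unfolding S_def by auto
  qed (use \<open>x0 \<in> S\<close> \<alpha> bounded_above in \<open>auto simp: S_def\<close>)
  moreover have "\<xi> y \<in> {\<alpha> - 1..1 - \<alpha>}" if "y < x0" for y
    using cInf_lower[OF _ \<open>bdd_below S\<close>, of y] that bounded_below unfolding x0_def S_def by force
  ultimately show ?thesis using that by blast
qed

end

lemma nn_integral_Icc_add_le:
  fixes h :: "real \<Rightarrow> real"
  assumes hm: "h \<in> borel_measurable borel" and h0: "\<And>x. 0 \<le> h x" and "l \<le> a" "a \<le> r"
  shows "(\<integral>\<^sup>+x. ennreal (indicator {l..a} x * h x) \<partial>lborel) + (\<integral>\<^sup>+x. ennreal (indicator {a..r} x * h x) \<partial>lborel)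
     \<le> (\<integral>\<^sup>+x. ennreal (indicator {l..r} x * h x) \<partial>lborel)"
proof -
  have "(\<integral>\<^sup>+x. ennreal (indicator {l..a} x * h x) \<partial>lborel) + (\<integral>\<^sup>+x. ennreal (indicator {a..r} x * h x) \<partial>lborel)
     = (\<integral>\<^sup>+x. ennreal (indicator {l..a} x * h x) + ennreal (indicator {a..r} x * h x) \<partial>lborel)"
    using hm by (intro nn_integral_add[symmetric]) auto
  also have "\<dots> \<le> (\<integral>\<^sup>+x. ennreal (indicator {l..r} x * h x) \<partial>lborel)"
  proof (rule nn_integral_mono_AE)
    have "AE x in lborel. x \<noteq> a" by (rule AE_lborel_singleton)
    then show "AE x in lborel. ennreal (indicator {l..a} x * h x) + ennreal (indicator {a..r} x * h x)
                 \<le> ennreal (indicator {l..r} x * h x)"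
      by eventually_elim (use assms in \<open>auto simp: indicator_def ennreal_plus[symmetric] simp del: ennreal_plus\<close>)
  qed
  finally show ?thesis .
qed

lemma Adelta_single_transition:
  assumes wp: "well_potential w" and pv: "profile v" and \<alpha>: "0 < \<alpha>" "\<alpha> \<le> 1/2"
    and C: "0 \<le> C" "C < 2 * transition_cost w \<alpha> (1 - \<alpha>)"
    and \<delta>: "0 < \<delta>" and \<xi>: "\<xi> \<in> Adelta v \<delta>" and E: "Edelta w v \<delta> \<xi> \<le> ennreal C"
  obtains x0 where "\<And>y. x0 \<le> y \<Longrightarrow> \<xi> y \<in> {\<alpha>..2 - \<alpha>}" "\<And>y. y < x0 \<Longrightarrow> \<xi> y \<in> {\<alpha> - 1..1 - \<alpha>}"
proof -
  have wc: "continuous_on UNIV w" and w0: "\<And>t. 0 \<le> w t"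
    using well_potential_continuous[OF wp] well_potential_nonneg[OF wp] by auto
  have \<xi>c: "continuous_on UNIV \<xi>" and aff: "grid_affine \<delta> \<xi>"
    and L2: "integrable lborel (\<lambda>x. (\<xi> x - v x)\<^sup>2)"
    using \<xi> by (auto simp: Adelta_iff Aset_def H1_def)
  define h where "h x = (grid_slope \<delta> \<xi> x)\<^sup>2 + w (\<xi> x)" for x
  have hm: "h \<in> borel_measurable borel"
    using borel_measurable_grid_slope[OF \<xi>c] borel_measurable_continuous_onI[OF \<xi>c]
      borel_measurable_continuous_onI[OF wc] unfolding h_def by measurable
  have h0: "0 \<le> h x" for x unfolding h_def using w0 by simp
  define En where "En a b = (\<integral>\<^sup>+x. ennreal (indicator {a..b} x * h x) \<partial>lborel)" for a b
  interpret bounded_transition_energy w \<xi> En \<alpha> C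
  proof
    show "En l a + En a r \<le> En l r" if "l \<le> a" "a \<le> r" for l a r
      unfolding En_def by (rule nn_integral_Icc_add_le[OF hm h0 that])
    show "En a b \<le> ennreal C" for a b
    proof -
      have "En a b \<le> (\<integral>\<^sup>+x. ennreal (h x) \<partial>lborel)"
        unfolding En_def using h0 by (intro nn_integral_mono) (simp add: indicator_def)
      also have "\<dots> \<le> ennreal C"
        using E unfolding Edelta_eq_grid_energy[OF \<delta> \<xi> wc w0] h_def .
      finally show ?thesis .
    qed
    show "ennreal (transition_cost w (\<xi> a) (\<xi> b)) \<le> En a b" if "a \<le> b" for a b
      unfolding En_def h_def
      by (rule transition_cost_le_energy[OF finite_grid_Int_interval[OF \<delta>, of a b] that \<xi>c _
            borel_measurable_grid_slope[OF \<xi>c] wc w0])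
         (auto intro: grid_affine_has_real_derivative[OF \<delta> aff])
    show "\<exists>l<M. \<xi> l < \<alpha>" for M
      using L2_perturbation_below_left[OF L2 _ \<alpha>(1)] pv by (simp add: profile_def)
    show "\<exists>r>M. 1 - \<alpha> < \<xi> r" for M
      using L2_perturbation_above_right[OF L2 _ \<alpha>(1)] pv by (simp add: profile_def)
  qed (use wc w0 well_potential_periodic[OF wp] \<xi>c \<alpha> C in auto)
  show ?thesis by (rule single_transition) (use that in blast)
qed

section \<open>The L^2 estimate\<close>

(* Dominates 2 (1 - v)^2 on [0, \<infinity>) and 2 v^2 on (-\<infinity>, 1]: the wells are compared with v
   on the two sides of a transition point lying in [0, 1]. *)
definition profile_envelope :: "(real \<Rightarrow> real) \<Rightarrow> real \<Rightarrow> real" where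
  "profile_envelope v x = 2 * (indicator {0..} x * (1 - v x)\<^sup>2 + indicator {..0} x * (v x)\<^sup>2
     + indicator {0..1} x * ((v 0)\<^sup>2 + (v 1)\<^sup>2))"

lemma profile_envelope_nonneg: "0 \<le> profile_envelope v x"
  by (simp add: profile_envelope_def)

lemma integrable_profile_envelope:
  assumes "profile v"
  shows "integrable lborel (profile_envelope v)"
proof -
  have "integrable lborel (\<lambda>x. indicator {0..1::real} x *\<^sub>R ((v 0)\<^sup>2 + (v 1)\<^sup>2))"
    by (rule integrable_indicator) auto
  moreover have "integrable lborel (\<lambda>x. indicator {0..} x * (1 - v x)\<^sup>2)"
    "integrable lborel (\<lambda>x. indicator {..0} x * (v x)\<^sup>2)"
    using assms unfolding profile_def set_integrable_def by auto
  ultimately show ?thesis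
    unfolding profile_envelope_def by (intro integrable_mult_right Bochner_Integration.integrable_add) auto
qed

lemma power2_diff_le_twice: "((a::real) - b)\<^sup>2 \<le> 2 * (a - c)\<^sup>2 + 2 * (c - b)\<^sup>2"
proof -
  have "0 \<le> ((a - c) - (c - b))\<^sup>2" by simp
  then show ?thesis by (simp add: power2_eq_square algebra_simps)
qed

lemma power2_le_between:
  fixes p x q :: real
  assumes "p \<le> x" "x \<le> q"
  shows "x\<^sup>2 \<le> p\<^sup>2 + q\<^sup>2"
proof -
  have "\<bar>x\<bar>\<^sup>2 \<le> (max \<bar>p\<bar> \<bar>q\<bar>)\<^sup>2" using assms by (intro power_mono) auto
  also have "\<dots> \<le> p\<^sup>2 + q\<^sup>2" by (simp add: max_def)
  finally show ?thesis by simp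
qed

lemma square_deviation_le_envelope:
  fixes v w :: "real \<Rightarrow> real"
  assumes "mono v" and wper: "\<And>t. w (t + 1) = w t"
    and coercive: "\<And>z. z \<in> {\<alpha>..2 - \<alpha>} \<Longrightarrow> (z - 1)\<^sup>2 \<le> K * w z"
    and xz: "0 \<le> x \<and> z \<in> {\<alpha>..2 - \<alpha>} \<or> x \<le> 1 \<and> z \<in> {\<alpha> - 1..1 - \<alpha>}"
  shows "(z - v x)\<^sup>2 \<le> 2 * K * w z + profile_envelope v x"
  using xz
proof
  assume x: "0 \<le> x \<and> z \<in> {\<alpha>..2 - \<alpha>}"
  then have "2 * (1 - v x)\<^sup>2 \<le> profile_envelope v x"
    by (auto simp: profile_envelope_def indicator_def)
  then show ?thesis
    using power2_diff_le_twice[of z "v x" 1] coercive[of z] x by linarith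
next
  assume x: "x \<le> 1 \<and> z \<in> {\<alpha> - 1..1 - \<alpha>}"
  have "z\<^sup>2 \<le> K * w z"
    using coercive[of "z + 1"] wper[of z] x by auto
  moreover have "2 * (v x)\<^sup>2 \<le> profile_envelope v x"
  proof (cases "x \<le> 0")
    case False
    then have "(v x)\<^sup>2 \<le> (v 0)\<^sup>2 + (v 1)\<^sup>2"
      using x \<open>mono v\<close> by (intro power2_le_between) (auto simp: mono_def)
    then show ?thesis
      using False x unfolding profile_envelope_def indicator_def
      by simp (use zero_le_power2[of "1 - v x"] in linarith)
  qed (simp add: profile_envelope_def indicator_def)
  moreover have "(z - v x)\<^sup>2 \<le> 2 * z\<^sup>2 + 2 * (v x)\<^sup>2"
    using power2_diff_le_twice[of z "v x" 0] by simp
  ultimately show ?thesis by linarith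
qed

lemma translate_L2_le:
  fixes v w \<xi> :: "real \<Rightarrow> real"
  assumes "mono v" and wc: "continuous_on UNIV w" and w0: "\<And>t. 0 \<le> w t"
    and wper: "\<And>t. w (t + 1) = w t" and \<xi>c: "continuous_on UNIV \<xi>" and "0 \<le> K"
    and coercive: "\<And>z. z \<in> {\<alpha>..2 - \<alpha>} \<Longrightarrow> (z - 1)\<^sup>2 \<le> K * w z"
    and right: "\<And>y. x0 \<le> y \<Longrightarrow> \<xi> y \<in> {\<alpha>..2 - \<alpha>}"
    and left: "\<And>y. y < x0 \<Longrightarrow> \<xi> y \<in> {\<alpha> - 1..1 - \<alpha>}"
    and s: "s \<le> x0" "x0 \<le> s + 1"
  shows "(\<integral>\<^sup>+x. ennreal ((\<xi> (x + s) - v x)\<^sup>2) \<partial>lborel)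
    \<le> ennreal (2 * K) * (\<integral>\<^sup>+x. ennreal (w (\<xi> x)) \<partial>lborel) + (\<integral>\<^sup>+x. ennreal (profile_envelope v x) \<partial>lborel)"
proof -
  have [measurable]: "\<xi> \<in> borel_measurable borel" "w \<in> borel_measurable borel" "v \<in> borel_measurable borel"
    using borel_measurable_continuous_onI \<xi>c wc borel_measurable_mono[OF \<open>mono v\<close>] by blast+
  have "(\<integral>\<^sup>+x. ennreal ((\<xi> (x + s) - v x)\<^sup>2) \<partial>lborel)
      \<le> (\<integral>\<^sup>+x. ennreal (2 * K) * ennreal (w (\<xi> (x + s))) + ennreal (profile_envelope v x) \<partial>lborel)"
  proof (rule nn_integral_mono)
    fix x
    have "0 \<le> x \<and> \<xi> (x + s) \<in> {\<alpha>..2 - \<alpha>} \<or> x \<le> 1 \<and> \<xi> (x + s) \<in> {\<alpha> - 1..1 - \<alpha>}"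
      using right[of "x + s"] left[of "x + s"] s by (cases "x0 \<le> x + s") auto
    then have "(\<xi> (x + s) - v x)\<^sup>2 \<le> 2 * K * w (\<xi> (x + s)) + profile_envelope v x"
      using square_deviation_le_envelope[of v w \<alpha> K x "\<xi> (x + s)"] \<open>mono v\<close> wper coercive by blast
    then show "ennreal ((\<xi> (x + s) - v x)\<^sup>2)
        \<le> ennreal (2 * K) * ennreal (w (\<xi> (x + s))) + ennreal (profile_envelope v x)"
      using \<open>0 \<le> K\<close> w0 profile_envelope_nonneg
      by (simp add: ennreal_plus[symmetric] ennreal_mult[symmetric] del: ennreal_plus)
  qed
  also have "\<dots> = ennreal (2 * K) * (\<integral>\<^sup>+x. ennreal (w (\<xi> (x + s))) \<partial>lborel)
      + (\<integral>\<^sup>+x. ennreal (profile_envelope v x) \<partial>lborel)"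
    by (simp add: nn_integral_add nn_integral_cmult profile_envelope_def)
  also have "(\<integral>\<^sup>+x. ennreal (w (\<xi> (x + s))) \<partial>lborel) = (\<integral>\<^sup>+x. ennreal (w (\<xi> x)) \<partial>lborel)"
    using nn_integral_real_affine[of "\<lambda>x. ennreal (w (\<xi> x))" 1 s] by (simp add: add.commute)
  finally show ?thesis .
qed

lemma Adelta_translate_L2_le:
  assumes wp: "well_potential w" and v: "profile v" and \<alpha>: "0 < \<alpha>" "\<alpha> \<le> 1/2"
    and C: "0 \<le> C" "C < 2 * transition_cost w \<alpha> (1 - \<alpha>)"
    and K: "0 \<le> K" "\<And>z. z \<in> {\<alpha>..2 - \<alpha>} \<Longrightarrow> (z - 1)\<^sup>2 \<le> K * w z"
    and \<delta>: "0 < \<delta>" "\<delta> \<le> 1" and \<xi>: "\<xi> \<in> Adelta v \<delta>" and E: "Edelta w v \<delta> \<xi> \<le> ennreal C"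
  shows "\<exists>k::int. (\<integral>\<^sup>+x. ennreal ((\<xi> (x + of_int k * \<delta>) - v x)\<^sup>2) \<partial>lborel)
    \<le> ennreal (2 * K * C + (\<integral>x. profile_envelope v x \<partial>lborel))"
proof -
  have wc: "continuous_on UNIV w" and w0: "\<And>t. 0 \<le> w t" and wper: "\<And>t. w (t + 1) = w t"
    using well_potential_continuous well_potential_nonneg well_potential_periodic wp by auto
  have "mono v" using v by (simp add: profile_def strict_mono_mono)
  have \<xi>c: "continuous_on UNIV \<xi>" using \<xi> by (simp add: Adelta_iff)
  obtain x0 where x0: "\<And>y. x0 \<le> y \<Longrightarrow> \<xi> y \<in> {\<alpha>..2 - \<alpha>}" "\<And>y. y < x0 \<Longrightarrow> \<xi> y \<in> {\<alpha> - 1..1 - \<alpha>}"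
    using Adelta_single_transition[OF wp v \<alpha> C \<delta>(1) \<xi> E] by blast
  \<comment> \<open>\<delta> \<le> 1 moves the transition of the translate into [0, 1].\<close>
  define k where "k = \<lfloor>x0 / \<delta>\<rfloor>"
  have "of_int k * \<delta> \<le> x0" "x0 < of_int k * \<delta> + \<delta>"
    using floor_divide_lower[OF \<delta>(1), of x0] floor_divide_upper[OF \<delta>(1), of x0]
    unfolding k_def by (simp_all add: algebra_simps)
  with \<delta>(2) have k: "of_int k * \<delta> \<le> x0" "x0 \<le> of_int k * \<delta> + 1" by linarith+
  have "(\<integral>\<^sup>+x. ennreal ((\<xi> (x + of_int k * \<delta>) - v x)\<^sup>2) \<partial>lborel)
      \<le> ennreal (2 * K) * (\<integral>\<^sup>+x. ennreal (w (\<xi> x)) \<partial>lborel) + (\<integral>\<^sup>+x. ennreal (profile_envelope v x) \<partial>lborel)"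
    by (rule translate_L2_le[of v w \<xi> K \<alpha> x0, OF \<open>mono v\<close> wc w0 wper \<xi>c K x0 k])
  also have "\<dots> \<le> ennreal (2 * K) * ennreal C + (\<integral>\<^sup>+x. ennreal (profile_envelope v x) \<partial>lborel)"
    using Edelta_ge_potential[OF \<delta>(1) \<xi> wc w0] E by (intro add_mono mult_left_mono) auto
  also have "\<dots> = ennreal (2 * K * C + (\<integral>x. profile_envelope v x \<partial>lborel))"
    using K(1) C(1) integrable_profile_envelope[OF v] profile_envelope_nonneg
    by (simp add: nn_integral_eq_integral ennreal_mult ennreal_plus)
  finally show ?thesis by blast
qed

theorem lemma3p2:
  fixes w :: "real \<Rightarrow> real"
  assumes "well_potential w"
  shows "\<exists>\<alpha>0. 0 < \<alpha>0 \<and> \<alpha>0 \<le> 1/2 \<and>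
    (\<forall>vbar \<alpha> C. profile vbar \<longrightarrow> 0 < \<alpha> \<longrightarrow> \<alpha> < \<alpha>0 \<longrightarrow>
       pfun w 1 < C \<longrightarrow> C < 3/2 * (pfun w (1 - \<alpha>) - pfun w \<alpha>) \<longrightarrow>
       (\<exists>Cbar > 0. \<forall>\<delta> \<xi>. 0 < \<delta> \<longrightarrow> \<delta> \<le> 1 \<longrightarrow> \<xi> \<in> Adelta vbar \<delta> \<longrightarrow>
          Edelta w vbar \<delta> \<xi> \<le> ennreal C \<longrightarrow>
          (\<exists>k::int. (\<integral>\<^sup>+x. ennreal ((\<xi> (x + of_int k * \<delta>) - vbar x)\<^sup>2) \<partial>lborel)
                      \<le> ennreal (Cbar\<^sup>2))))"
proof (rule exI[of _ "1/2"], intro conjI allI impI)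
  fix v \<alpha> C
  assume v: "profile v" and \<alpha>: "0 < \<alpha>" "\<alpha> < 1/2"
    and "pfun w 1 < C" "C < 3/2 * (pfun w (1 - \<alpha>) - pfun w \<alpha>)"
  then have C: "0 < C" "C < 2 * transition_cost w \<alpha> (1 - \<alpha>)"
    using energy_window_transition_cost well_potential_continuous well_potential_nonneg assms by metis+
  obtain K where K: "0 < K" "\<And>z. z \<in> {\<alpha>..2 - \<alpha>} \<Longrightarrow> (z - 1)\<^sup>2 \<le> K * w z"
    using well_potential_coercive[OF assms \<alpha>(1)] \<alpha> by auto
  define E where "E = (\<integral>x. profile_envelope v x \<partial>lborel)"
  have "0 \<le> E" unfolding E_def by (intro integral_nonneg_AE AE_I2 profile_envelope_nonneg)
  then have Cbar: "0 < 2 * K * C + E + 1" using mult_pos_pos[OF K(1) C(1)] by linarith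
  show "\<exists>Cbar>0. \<forall>\<delta> \<xi>. 0 < \<delta> \<longrightarrow> \<delta> \<le> 1 \<longrightarrow> \<xi> \<in> Adelta v \<delta> \<longrightarrow> Edelta w v \<delta> \<xi> \<le> ennreal C \<longrightarrow>
      (\<exists>k::int. (\<integral>\<^sup>+x. ennreal ((\<xi> (x + of_int k * \<delta>) - v x)\<^sup>2) \<partial>lborel) \<le> ennreal (Cbar\<^sup>2))"
  proof (intro exI[of _ "sqrt (2 * K * C + E + 1)"] conjI allI impI)
    show "0 < sqrt (2 * K * C + E + 1)" using Cbar by simp
    fix \<delta> \<xi> assume "0 < \<delta>" "\<delta> \<le> 1" "\<xi> \<in> Adelta v \<delta>" "Edelta w v \<delta> \<xi> \<le> ennreal C"
    then obtain k where "(\<integral>\<^sup>+x. ennreal ((\<xi> (x + of_int k * \<delta>) - v x)\<^sup>2) \<partial>lborel) \<le> ennreal (2 * K * C + E)"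
      using Adelta_translate_L2_le[OF assms v \<alpha>(1) _ _ C(2) _ K(2)] \<alpha> C(1) K(1) unfolding E_def by force
    moreover have "ennreal (2 * K * C + E) \<le> ennreal ((sqrt (2 * K * C + E + 1))\<^sup>2)"
      using Cbar by (intro ennreal_leI) simp
    ultimately show "\<exists>k::int. (\<integral>\<^sup>+x. ennreal ((\<xi> (x + of_int k * \<delta>) - v x)\<^sup>2) \<partial>lborel)
        \<le> ennreal ((sqrt (2 * K * C + E + 1))\<^sup>2)" by (blast intro: order_trans)
  qed
qed simp_all

end
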